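(* Let $n\ge2$. There exists a constant $C>0$ depending only on $n$ such that for every $u\in C_c^\infty(\overline{\mathbb R_+^n})$, $$\int_{\mathbb R_+^n}|u|\, \mathrm d\tilde{\mu}_n(x)\leq C\Big[\int_{\partial\mathbb R_+^n}|u|\,\mathrm d\mu_n(x')+\Big(\int_{\mathbb R_+^n}|\nabla u|^n\mathrm dx\Big)^{\frac 1 n}\Big]$$ and $$\int_{\partial\mathbb R_+^n}|u|\,\mathrm d\mu_n(x')\leq C\Big[\int_{\mathbb R_+^n}|u|\, \mathrm d\tilde{\mu}_n(x)+\Big(\int_{\mathbb R_+^n}|\nabla u|^n\mathrm dx\Big)^{\frac 1 n}\Big].$$
   Context: $\mathbb R_+^n=\{x=(x',t):x'\in\mathbb R^{n-1},t>0\}$, $\partial\mathbb R_+^n\cong\mathbb R^{n-1}$. $\sigma_{k}=|\mathbb S^{k}|$. $\mathrm d\mu_n(x')=\frac{2\,\mathrm dx'}{\sigma_{n-1}(1+|x'|^2)^{n/2}}$ on $\partial\mathbb R^n_+$, and $\mathrm d\tilde\mu_n(x)=\mu_{n+1}(x)\,\mathrm dx$ on $\mathbb R^n_+$ with $\mu_{n+1}(x',t)=\frac{2}{\sigma_{n}((1+t)^2+|x'|^2)^{(n+1)/2}}$. $C_c^\infty(\overline{\mathbb R_+^n})$: smooth functions on $\overline{\mathbb R^n_+}$ with compact support in $\mathbb R^n$. *)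

theory Defs
  imports "HOL-Analysis.Analysis"
begin

text \<open>sigma k = |S^k|, the surface measure of the unit sphere in R^(k+1).\<close>
definition sphere_area :: "nat \<Rightarrow> real" where
  "sphere_area k = 2 * pi powr (real (k + 1) / 2) / Gamma (real (k + 1) / 2)"

fun dderiv :: "'a::real_normed_vector list \<Rightarrow> ('a \<Rightarrow> real) \<Rightarrow> 'a \<Rightarrow> real" where
  "dderiv [] f = f"
| "dderiv (v # vs) f = (\<lambda>x. frechet_derivative (dderiv vs f) (at x) v)"

definition smooth_fun :: "('a::real_normed_vector \<Rightarrow> real) \<Rightarrow> bool" where
  "smooth_fun f \<longleftrightarrow> (\<forall>vs x. dderiv vs f differentiable (at x))"

definition grad_norm :: "('a::euclidean_space \<Rightarrow> real) \<Rightarrow> 'a \<Rightarrow> real" where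
  "grad_norm f x = sqrt (\<Sum>b\<in>Basis. (frechet_derivative f (at x) b)\<^sup>2)"

text \<open>Points of R^n are pairs (x', t) with x' in R^(n-1) = real^'m, so n = CARD('m) + 1.\<close>
definition upper_half :: "((real^('m::finite)) \<times> real) set" where
  "upper_half = {(x', t). t > 0}"

definition mu_bdry :: "nat \<Rightarrow> real^'m \<Rightarrow> real" where
  "mu_bdry n x' = 2 / (sphere_area (n - 1) * (1 + (norm x')\<^sup>2) powr (real n / 2))"

definition mu_int :: "nat \<Rightarrow> ((real^'m) \<times> real) \<Rightarrow> real" where
  "mu_int n p = 2 / (sphere_area n * ((1 + snd p)\<^sup>2 + (norm (fst p))\<^sup>2) powr (real (n + 1) / 2))"

end

theory Submission
  imports Defs
begin

text \<open>Both weights are comparable to powers of the distance to infinity: \<open>mu_int n (x', t)\<close>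
  behaves like \<open>(1 + norm x' + t) powr (-(n + 1))\<close> and \<open>mu_bdry n x'\<close> like
  \<open>(1 + norm x') powr (-n)\<close>. Along each vertical half-line the fundamental theorem of calculus
  bounds \<open>\<bar>u (x', t) - u (x', 0)\<bar>\<close> by the integral of \<open>grad_norm u\<close> over \<open>[0, t]\<close>. Integrating
  this against \<open>mu_int\<close> in \<open>t\<close> gives the interior bound, and averaging it over
  \<open>0 \<le> t \<le> 1 + norm x'\<close> gives the boundary bound; in both cases, after Tonelli, the error term is
  the integral of \<open>grad_norm u\<close> against \<open>(1 + norm x' + t) powr (-n)\<close> over the half-space. This
  weight lies in \<open>L\<^sup>q\<close> for the dual exponent \<open>q = n / (n - 1)\<close>, so Hoelder's inequality bounds
  the error term by the \<open>L\<^sup>n\<close> norm of the gradient.\<close>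

section \<open>Elementary integrals\<close>

lemma nn_integral_powr_tail:
  fixes c p s :: real
  assumes p: "p > 1" and cs: "c + s > 0"
  shows "(\<integral>\<^sup>+t. ennreal ((c + t) powr (-p)) * indicator {s..} t \<partial>lborel)
     = ennreal ((c + s) powr (1 - p) / (p - 1))"
proof -
  let ?F = "\<lambda>t::real. - ((c + t) powr (1 - p) / (p - 1))"
  have "(\<integral>\<^sup>+t\<in>{s..}. ennreal ((c + t) powr (-p)) \<partial>lborel) = ennreal (0 - ?F s)"
  proof (rule nn_integral_FTC_atLeast)
    fix x assume "s \<le> x"
    then have x: "c + x > 0" using cs by linarith
    have "(?F has_real_derivative - ((1 - p) * (c + x) powr (1 - p - 1) / (p - 1))) (at x)"
      using x p by (auto intro!: derivative_eq_intros)
    moreover have "- ((1 - p) * (c + x) powr (1 - p - 1) / (p - 1)) = (c + x) powr (-p)"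
      using p by (simp add: field_simps)
    ultimately show "(?F has_real_derivative (c + x) powr (-p)) (at x)" by simp
  next
    have "((\<lambda>t. (c + t) powr (1 - p)) \<longlongrightarrow> 0) at_top"
      using p by (intro tendsto_neg_powr) (auto intro: filterlim_tendsto_add_at_top[OF tendsto_const filterlim_ident])
    then have "((\<lambda>t. - ((c + t) powr (1 - p) / (p - 1))) \<longlongrightarrow> - (0 / (p - 1))) at_top"
      by (intro tendsto_minus tendsto_divide tendsto_const) (use p in auto)
    then show "(?F \<longlongrightarrow> 0) at_top" by simp
  qed auto
  then show ?thesis by simp
qed

lemma nn_integral_one_plus_abs_powr:
  fixes p :: real
  assumes p: "p > 1"
  shows "(\<integral>\<^sup>+y. ennreal ((1 + \<bar>y\<bar>) powr (-p)) \<partial>lborel) = ennreal (2 / (p - 1))"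
proof -
  define h where "h y = ennreal ((1 + y) powr (-p)) * indicator {0..} y" for y :: real
  have hm: "h \<in> borel_measurable borel" unfolding h_def by measurable
  have "(\<integral>\<^sup>+y. ennreal ((1 + \<bar>y\<bar>) powr (-p)) \<partial>lborel) = (\<integral>\<^sup>+y. h y + h (-y) \<partial>lborel)"
    by (intro nn_integral_cong_AE) (use AE_lborel_singleton[of 0] in \<open>auto simp: h_def split: split_indicator\<close>)
  also have "\<dots> = integral\<^sup>N lborel h + (\<integral>\<^sup>+y. h (-y) \<partial>lborel)"
    by (intro nn_integral_add) (use hm in measurable)
  also have "(\<integral>\<^sup>+y. h (-y) \<partial>lborel) = integral\<^sup>N lborel h"
    using nn_integral_real_affine[OF hm, of "-1" 0] by simp
  also have "integral\<^sup>N lborel h = ennreal (1 / (p - 1))"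
    unfolding h_def using nn_integral_powr_tail[OF p, of 1 0] by simp
  finally show ?thesis using p by (simp flip: ennreal_plus)
qed

lemma nn_integral_prod_one_plus_abs_powr:
  fixes p :: real
  assumes p: "p > 1"
  shows "(\<integral>\<^sup>+x. (\<Prod>b\<in>(Basis::'a::euclidean_space set). ennreal ((1 + \<bar>x \<bullet> b\<bar>) powr (-p))) \<partial>lborel)
     = ennreal (2 / (p - 1)) ^ DIM('a)"
  by (subst nn_integral_lborel_prod) (auto simp: nn_integral_one_plus_abs_powr[OF p])

lemma one_plus_norm_powr_le_prod:
  fixes x :: "'a::euclidean_space" and q :: real
  assumes q: "q \<ge> 0"
  shows "(1 + norm x) powr (-q) \<le> (\<Prod>b\<in>Basis. (1 + \<bar>x \<bullet> b\<bar>) powr (-q / DIM('a)))"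
proof -
  have "1 + norm x > 0"
    by (simp add: add_pos_nonneg)
  then have "((1 + norm x) powr (-q / DIM('a))) ^ DIM('a) = ((1 + norm x) powr (-q / DIM('a))) powr DIM('a)"
    by (simp add: powr_realpow)
  then have "(1 + norm x) powr (-q) = ((1 + norm x) powr (-q / DIM('a))) ^ DIM('a)"
    by (simp add: powr_powr)
  also have "\<dots> = (\<Prod>b\<in>(Basis::'a set). (1 + norm x) powr (-q / DIM('a)))"
    by simp
  also have "\<dots> \<le> (\<Prod>b\<in>Basis. (1 + \<bar>x \<bullet> b\<bar>) powr (-q / DIM('a)))"
    using Basis_le_norm q by (intro prod_mono conjI powr_mono2') (auto simp: divide_nonneg_pos)
  finally show ?thesis .
qed

lemma nn_integral_half_space_weight_finite:
  fixes P :: real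
  assumes P: "P > DIM('a::euclidean_space) + 1"
  shows "(\<integral>\<^sup>+x. \<integral>\<^sup>+s. ennreal ((1 + norm (x::'a) + s) powr (-P)) * indicator {0..} s \<partial>lborel \<partial>lborel) < \<infinity>"
proof -
  define q where "q = (P - 1) / DIM('a)"
  have q: "q > 1" using P by (simp add: q_def field_simps)
  have "(\<integral>\<^sup>+x. \<integral>\<^sup>+s. ennreal ((1 + norm (x::'a) + s) powr (-P)) * indicator {0..} s \<partial>lborel \<partial>lborel)
      = (\<integral>\<^sup>+x. ennreal ((1 + norm (x::'a)) powr (1 - P) / (P - 1)) \<partial>lborel)"
    using P nn_integral_powr_tail[of P "1 + norm (_::'a)" 0] by (simp add: add_pos_nonneg)
  also have "\<dots> \<le> (\<integral>\<^sup>+x. ennreal (1 / (P - 1)) * (\<Prod>b\<in>(Basis::'a set). ennreal ((1 + \<bar>x \<bullet> b\<bar>) powr (-q))) \<partial>lborel)"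
  proof (intro nn_integral_mono)
    fix x :: 'a
    have "(1 + norm x) powr (1 - P) / (P - 1) \<le> 1 / (P - 1) * (\<Prod>b\<in>Basis. (1 + \<bar>x \<bullet> b\<bar>) powr (-q))"
      using P one_plus_norm_powr_le_prod[of "P - 1" x]
      by (simp add: q_def divide_right_mono minus_divide_left)
    then show "ennreal ((1 + norm x) powr (1 - P) / (P - 1))
        \<le> ennreal (1 / (P - 1)) * (\<Prod>b\<in>Basis. ennreal ((1 + \<bar>x \<bullet> b\<bar>) powr (-q)))"
      using P by (subst prod_ennreal, simp, subst ennreal_mult[symmetric]) (auto intro!: ennreal_leI prod_nonneg)
  qed
  also have "\<dots> = ennreal (1 / (P - 1)) * ennreal (2 / (q - 1)) ^ DIM('a)"
    by (simp add: nn_integral_cmult nn_integral_prod_one_plus_abs_powr[OF q])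
  also have "\<dots> < \<infinity>"
    by (simp add: ennreal_mult_less_top power_less_top_ennreal)
  finally show ?thesis .
qed

lemma Youngs_inequality_scaled:
  fixes p q e a b :: real
  assumes p: "p > 1" and q: "q > 1" and pq: "1/p + 1/q = 1"
    and e: "e > 0" and a: "a \<ge> 0" and b: "b \<ge> 0"
  shows "a * b \<le> e powr p / p * a powr p + e powr (-q) / q * b powr q"
proof -
  have "a * b = (e * a) * (b / e)" using e by simp
  also have "\<dots> \<le> (e * a) powr p / p + (b / e) powr q / q"
    using e a b by (intro Youngs_inequality[OF p q pq]) auto
  also have "\<dots> = e powr p / p * a powr p + e powr (-q) / q * b powr q"
    using e a b by (simp add: powr_mult powr_divide powr_minus_divide)
  finally show ?thesis .
qed

text \<open>Young's inequality integrated with the optimal scaling: a form of Hoelder's inequality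
  that is linear, rather than of power \<open>1/q\<close>, in the integral of \<open>w powr q\<close>.\<close>
lemma nn_integral_mult_le_Young:
  fixes G w :: "'b \<Rightarrow> real" and p q E A :: real
  assumes p: "p > 1" and q: "q > 1" and pq: "1/p + 1/q = 1"
    and [measurable]: "G \<in> borel_measurable M" "w \<in> borel_measurable M"
    and G0: "\<And>x. G x \<ge> 0" and w0: "\<And>x. w x \<ge> 0"
    and E: "(\<integral>\<^sup>+x. ennreal (G x powr p) \<partial>M) = ennreal E" and E0: "E \<ge> 0"
    and A: "(\<integral>\<^sup>+x. ennreal (w x powr q) \<partial>M) \<le> ennreal A" and A0: "A \<ge> 0"
  shows "(\<integral>\<^sup>+x. ennreal (G x * w x) \<partial>M) \<le> ennreal (E powr (1/p) * (1/p + A/q))"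
proof (cases "E = 0")
  case True
  then have "AE x in M. ennreal (G x powr p) = 0"
    using E by (subst nn_integral_0_iff_AE[symmetric]) auto
  then have "AE x in M. ennreal (G x * w x) = 0"
    by eventually_elim (use G0 in auto)
  then show ?thesis
    by (subst nn_integral_0_iff_AE[THEN iffD2]) auto
next
  case False
  with E0 have Ep: "E > 0" by simp
  define e where "e = E powr (-1/(p*q))" \<comment> \<open>the scaling that balances the two terms\<close>
  have e0: "e > 0" using Ep by (simp add: e_def)
  have "G x * w x \<le> e powr p / p * G x powr p + e powr (-q) / q * w x powr q" for x
    using Youngs_inequality_scaled[OF p q pq e0 G0 w0] .
  then have "(\<integral>\<^sup>+x. ennreal (G x * w x) \<partial>M)
      \<le> (\<integral>\<^sup>+x. ennreal (e powr p / p) * ennreal (G x powr p) + ennreal (e powr (-q) / q) * ennreal (w x powr q) \<partial>M)"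
    using p q by (intro nn_integral_mono) (simp flip: ennreal_mult ennreal_plus add: ennreal_leI)
  also have "\<dots> = ennreal (e powr p / p) * ennreal E + ennreal (e powr (-q) / q) * (\<integral>\<^sup>+x. ennreal (w x powr q) \<partial>M)"
    by (simp add: nn_integral_add nn_integral_cmult E)
  also have "\<dots> \<le> ennreal (e powr p / p) * ennreal E + ennreal (e powr (-q) / q) * ennreal A"
    using A by (intro add_mono mult_left_mono) auto
  also have "\<dots> = ennreal (e powr p * E / p + e powr (-q) * A / q)"
    using p q E0 A0 by (simp add: ennreal_plus flip: ennreal_mult)
  also have "e powr p * E / p + e powr (-q) * A / q = E powr (1/p) * (1/p + A/q)"
  proof -
    have "e powr p * E = E powr (-1/q) * E powr 1"
      using p Ep by (simp add: e_def powr_powr)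
    also have "\<dots> = E powr (-1/q + 1)"
      by (rule powr_add[symmetric])
    also have "-1/q + 1 = 1/p" using pq by simp
    finally have "e powr p * E = E powr (1/p)" .
    moreover have "e powr (-q) = E powr (1/p)"
      using q by (simp add: e_def powr_powr)
    ultimately show ?thesis by (simp add: field_simps)
  qed
  finally show ?thesis .
qed

lemma ennreal_mult_add_le_mult_add:
  fixes a b x y :: ennreal
  shows "a * x + b * y \<le> (a + b) * (x + y)"
proof -
  have "(a + b) * (x + y) = (a * x + b * y) + (a * y + b * x)"
    by (simp add: algebra_simps)
  then show ?thesis
    by (simp add: add_increasing2)
qed

lemma nn_integral_le_cmult_add:
  fixes F B T :: "'a \<Rightarrow> ennreal"
  assumes [measurable]: "B \<in> borel_measurable M" "T \<in> borel_measurable M"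
    and le: "\<And>x. F x \<le> ennreal K * (B x + T x)"
  shows "(\<integral>\<^sup>+x. F x \<partial>M) \<le> ennreal K * ((\<integral>\<^sup>+x. B x \<partial>M) + (\<integral>\<^sup>+x. T x \<partial>M))"
proof -
  have "(\<integral>\<^sup>+x. F x \<partial>M) \<le> (\<integral>\<^sup>+x. ennreal K * (B x + T x) \<partial>M)"
    using le by (intro nn_integral_mono)
  also have "\<dots> = ennreal K * ((\<integral>\<^sup>+x. B x \<partial>M) + (\<integral>\<^sup>+x. T x \<partial>M))"
    by (simp add: nn_integral_cmult nn_integral_add)
  finally show ?thesis .
qed

lemma nn_integral_lborel_pair:
  fixes f :: "'a::euclidean_space \<times> 'b::euclidean_space \<Rightarrow> ennreal"
  assumes "f \<in> borel_measurable borel"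
  shows "(\<integral>\<^sup>+p. f p \<partial>lborel) = (\<integral>\<^sup>+x. \<integral>\<^sup>+y. f (x, y) \<partial>lborel \<partial>lborel)"
proof -
  have "f \<in> borel_measurable (lborel \<Otimes>\<^sub>M lborel)"
    using assms by (simp add: lborel_prod)
  from lborel.nn_integral_fst[OF this] show ?thesis
    by (simp add: lborel_prod)
qed

section \<open>Estimates on a half-line\<close>

text \<open>One-dimensional estimates along a vertical half-line: \<open>f\<close> is the restriction of the
  function, \<open>g\<close> bounds its derivative, \<open>m\<close> is the interior weight and \<open>a = 1 + norm x'\<close>.\<close>

lemma nn_integral_primitive_mult:
  fixes g M :: "real \<Rightarrow> ennreal"
  assumes [measurable]: "g \<in> borel_measurable borel" "M \<in> borel_measurable borel"
  shows "(\<integral>\<^sup>+t. (\<integral>\<^sup>+s. g s * indicator {0..t} s \<partial>lborel) * M t \<partial>lborel)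
    = (\<integral>\<^sup>+s. g s * indicator {0..} s * (\<integral>\<^sup>+t. M t * indicator {s..} t \<partial>lborel) \<partial>lborel)"
proof -
  have "(\<integral>\<^sup>+t. (\<integral>\<^sup>+s. g s * indicator {0..t} s \<partial>lborel) * M t \<partial>lborel)
      = (\<integral>\<^sup>+t. \<integral>\<^sup>+s. g s * indicator {0..t} s * M t \<partial>lborel \<partial>lborel)"
    by (simp add: nn_integral_multc)
  also have "\<dots> = (\<integral>\<^sup>+t. \<integral>\<^sup>+s. g s * indicator {0..} s * (M t * indicator {s..} t) \<partial>lborel \<partial>lborel)"
  proof (intro nn_integral_cong)
    fix s t :: real
    have "indicator {0..t} s = (indicator {0..} s * indicator {s..} t :: ennreal)"
      by (simp split: split_indicator)
    then show "g s * indicator {0..t} s * M t = g s * indicator {0..} s * (M t * indicator {s..} t)"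
      by (simp add: ac_simps)
  qed
  also have "\<dots> = (\<integral>\<^sup>+s. \<integral>\<^sup>+t. g s * indicator {0..} s * (M t * indicator {s..} t) \<partial>lborel \<partial>lborel)"
  proof (rule lborel_pair.Fubini'[symmetric])
    have [measurable]: "Measurable.pred (borel \<Otimes>\<^sub>M borel) (\<lambda>x::real \<times> real. fst x \<in> {snd x..})"
      unfolding atLeast_iff by measurable
    show "case_prod (\<lambda>t s. g s * indicator {0..} s * (M t * indicator {s..} t)) \<in> borel_measurable (lborel \<Otimes>\<^sub>M lborel)"
      by measurable
  qed
  finally show ?thesis
    by (simp add: nn_integral_cmult)
qed

lemma borel_measurable_nn_integral_Icc:
  fixes g :: "real \<Rightarrow> ennreal"
  assumes [measurable]: "g \<in> borel_measurable borel"
  shows "(\<lambda>t. \<integral>\<^sup>+s. g s * indicator {0..t} s \<partial>lborel) \<in> borel_measurable borel"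
proof -
  have [measurable]: "Measurable.pred (borel \<Otimes>\<^sub>M borel) (\<lambda>x::real \<times> real. snd x \<in> {0..fst x})"
    unfolding atLeastAtMost_iff by measurable
  have "(\<lambda>t. \<integral>\<^sup>+s. g s * indicator {0..t} s \<partial>lborel) \<in> borel_measurable lborel"
    by (rule lborel.borel_measurable_nn_integral) measurable
  then show ?thesis
    by simp
qed

lemma nn_integral_decay_tail:
  fixes m :: "real \<Rightarrow> real" and a c e s :: real
  assumes a: "a + s > 0" and e: "e > 0" and c: "c \<ge> 0"
    and decay: "\<And>t. t \<ge> s \<Longrightarrow> m t \<le> c * (a + t) powr (-(e + 1))"
  shows "(\<integral>\<^sup>+t. ennreal (m t) * indicator {s..} t \<partial>lborel) \<le> ennreal (c / e) * ennreal ((a + s) powr (-e))"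
proof -
  have "(\<integral>\<^sup>+t. ennreal (m t) * indicator {s..} t \<partial>lborel)
      \<le> (\<integral>\<^sup>+t. ennreal c * (ennreal ((a + t) powr (-(e + 1))) * indicator {s..} t) \<partial>lborel)"
    using c decay by (intro nn_integral_mono)
      (auto split: split_indicator simp flip: ennreal_mult intro!: ennreal_leI)
  also have "\<dots> = ennreal c * ennreal ((a + s) powr (-e) / e)"
    using nn_integral_powr_tail[of "e + 1" a s] a e by (simp add: nn_integral_cmult)
  also have "\<dots> = ennreal (c / e) * ennreal ((a + s) powr (-e))"
    using c e by (simp add: ennreal_mult'[symmetric] ennreal_mult[symmetric])
  finally show ?thesis .
qed

lemma nn_integral_halfline_le_tails:
  fixes f g m :: "real \<Rightarrow> real"
  assumes [measurable]: "f \<in> borel_measurable borel" "g \<in> borel_measurable borel" "m \<in> borel_measurable borel"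
    and m0: "\<And>t. m t \<ge> 0"
    and ftc: "\<And>t. t \<ge> 0 \<Longrightarrow> ennreal \<bar>f t - f 0\<bar> \<le> (\<integral>\<^sup>+s. ennreal (g s) * indicator {0..t} s \<partial>lborel)"
  shows "(\<integral>\<^sup>+t. ennreal (indicator {0<..} t * \<bar>f t\<bar> * m t) \<partial>lborel)
    \<le> ennreal \<bar>f 0\<bar> * (\<integral>\<^sup>+t. ennreal (m t) * indicator {0..} t \<partial>lborel)
      + (\<integral>\<^sup>+s. ennreal (g s) * indicator {0..} s * (\<integral>\<^sup>+t. ennreal (m t) * indicator {s..} t \<partial>lborel) \<partial>lborel)"
proof -
  define \<Phi> where "\<Phi> t = (\<integral>\<^sup>+s. ennreal (g s) * indicator {0..t} s \<partial>lborel)" for t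
  have [measurable]: "\<Phi> \<in> borel_measurable borel"
    unfolding \<Phi>_def[abs_def] by (rule borel_measurable_nn_integral_Icc) measurable
  have "(\<integral>\<^sup>+t. ennreal (indicator {0<..} t * \<bar>f t\<bar> * m t) \<partial>lborel)
      \<le> (\<integral>\<^sup>+t. ennreal \<bar>f 0\<bar> * (ennreal (m t) * indicator {0..} t) + \<Phi> t * ennreal (m t) \<partial>lborel)"
  proof (intro nn_integral_mono)
    fix t :: real
    show "ennreal (indicator {0<..} t * \<bar>f t\<bar> * m t) \<le> ennreal \<bar>f 0\<bar> * (ennreal (m t) * indicator {0..} t) + \<Phi> t * ennreal (m t)"
    proof (cases "t > 0")
      case True
      have "ennreal \<bar>f t\<bar> \<le> ennreal (\<bar>f 0\<bar> + \<bar>f t - f 0\<bar>)"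
        by (intro ennreal_leI) linarith
      also have "\<dots> \<le> ennreal \<bar>f 0\<bar> + \<Phi> t"
        using ftc[of t] True unfolding \<Phi>_def by (simp add: ennreal_plus add_left_mono)
      finally have "ennreal (\<bar>f t\<bar> * m t) \<le> (ennreal \<bar>f 0\<bar> + \<Phi> t) * ennreal (m t)"
        using m0[of t] by (simp add: ennreal_mult' mult_right_mono)
      then show ?thesis
        using True by (simp add: distrib_right mult.assoc)
    qed simp
  qed
  also have "(\<integral>\<^sup>+t. \<Phi> t * ennreal (m t) \<partial>lborel)
      = (\<integral>\<^sup>+s. ennreal (g s) * indicator {0..} s * (\<integral>\<^sup>+t. ennreal (m t) * indicator {s..} t \<partial>lborel) \<partial>lborel)"
    unfolding \<Phi>_def by (rule nn_integral_primitive_mult) measurable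
  then have "(\<integral>\<^sup>+t. ennreal \<bar>f 0\<bar> * (ennreal (m t) * indicator {0..} t) + \<Phi> t * ennreal (m t) \<partial>lborel)
      = ennreal \<bar>f 0\<bar> * (\<integral>\<^sup>+t. ennreal (m t) * indicator {0..} t \<partial>lborel)
        + (\<integral>\<^sup>+s. ennreal (g s) * indicator {0..} s * (\<integral>\<^sup>+t. ennreal (m t) * indicator {s..} t \<partial>lborel) \<partial>lborel)"
    by (subst nn_integral_add) (simp_all add: nn_integral_cmult)
  finally show ?thesis .
qed

lemma nn_integral_halfline_le_endpoint:
  fixes f g m :: "real \<Rightarrow> real" and a c e :: real
  assumes [measurable]: "f \<in> borel_measurable borel" "g \<in> borel_measurable borel" "m \<in> borel_measurable borel"
    and m0: "\<And>t. m t \<ge> 0" and a: "a > 0" and e: "e > 0" and c: "c \<ge> 0"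
    and ftc: "\<And>t. t \<ge> 0 \<Longrightarrow> ennreal \<bar>f t - f 0\<bar> \<le> (\<integral>\<^sup>+s. ennreal (g s) * indicator {0..t} s \<partial>lborel)"
    and decay: "\<And>t. t \<ge> 0 \<Longrightarrow> m t \<le> c * (a + t) powr (-(e + 1))"
  shows "(\<integral>\<^sup>+t. ennreal (indicator {0<..} t * \<bar>f t\<bar> * m t) \<partial>lborel)
    \<le> ennreal (c / e) * (ennreal (\<bar>f 0\<bar> * a powr (-e))
         + (\<integral>\<^sup>+s. ennreal (g s) * ennreal ((a + s) powr (-e)) * indicator {0..} s \<partial>lborel))"
proof -
  have tail: "(\<integral>\<^sup>+t. ennreal (m t) * indicator {s..} t \<partial>lborel) \<le> ennreal (c / e) * ennreal ((a + s) powr (-e))"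
    if "s \<ge> 0" for s
    using that a e c decay by (intro nn_integral_decay_tail) auto
  have "(\<integral>\<^sup>+t. ennreal (indicator {0<..} t * \<bar>f t\<bar> * m t) \<partial>lborel)
      \<le> ennreal \<bar>f 0\<bar> * (\<integral>\<^sup>+t. ennreal (m t) * indicator {0..} t \<partial>lborel)
      + (\<integral>\<^sup>+s. ennreal (g s) * indicator {0..} s * (\<integral>\<^sup>+t. ennreal (m t) * indicator {s..} t \<partial>lborel) \<partial>lborel)"
    by (rule nn_integral_halfline_le_tails[OF _ _ _ m0 ftc]) measurable
  also have "\<dots> \<le> ennreal \<bar>f 0\<bar> * (ennreal (c / e) * ennreal ((a + 0) powr (-e)))
      + (\<integral>\<^sup>+s. ennreal (g s) * indicator {0..} s * (ennreal (c / e) * ennreal ((a + s) powr (-e))) \<partial>lborel)"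
  proof (rule add_mono)
    show "ennreal \<bar>f 0\<bar> * (\<integral>\<^sup>+t. ennreal (m t) * indicator {0..} t \<partial>lborel)
        \<le> ennreal \<bar>f 0\<bar> * (ennreal (c / e) * ennreal ((a + 0) powr (-e)))"
      using tail[of 0] by (intro mult_left_mono) auto
    show "(\<integral>\<^sup>+s. ennreal (g s) * indicator {0..} s * (\<integral>\<^sup>+t. ennreal (m t) * indicator {s..} t \<partial>lborel) \<partial>lborel)
        \<le> (\<integral>\<^sup>+s. ennreal (g s) * indicator {0..} s * (ennreal (c / e) * ennreal ((a + s) powr (-e))) \<partial>lborel)"
      using tail by (intro nn_integral_mono) (auto split: split_indicator intro: mult_left_mono)
  qed
  also have "(\<integral>\<^sup>+s. ennreal (g s) * indicator {0..} s * (ennreal (c / e) * ennreal ((a + s) powr (-e))) \<partial>lborel)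
      = ennreal (c / e) * (\<integral>\<^sup>+s. ennreal (g s) * ennreal ((a + s) powr (-e)) * indicator {0..} s \<partial>lborel)"
    by (subst nn_integral_cmult[symmetric]) (auto intro!: nn_integral_cong simp: mult_ac)
  finally show ?thesis
    by (simp add: distrib_left ennreal_mult mult_ac)
qed

lemma endpoint_le_average_plus_variation:
  fixes f g :: "real \<Rightarrow> real" and a :: real
  assumes [measurable]: "f \<in> borel_measurable borel" and a: "a \<ge> 0"
    and ftc: "\<And>t. 0 \<le> t \<Longrightarrow> t \<le> a \<Longrightarrow> ennreal \<bar>f t - f 0\<bar> \<le> (\<integral>\<^sup>+s. ennreal (g s) * indicator {0..t} s \<partial>lborel)"
  shows "ennreal (a * \<bar>f 0\<bar>)
    \<le> (\<integral>\<^sup>+t. ennreal \<bar>f t\<bar> * indicator {0..a} t \<partial>lborel) + ennreal a * (\<integral>\<^sup>+s. ennreal (g s) * indicator {0..a} s \<partial>lborel)"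
proof -
  define \<Phi> where "\<Phi> = (\<integral>\<^sup>+s. ennreal (g s) * indicator {0..a} s \<partial>lborel)"
  have pointwise: "ennreal \<bar>f 0\<bar> \<le> ennreal \<bar>f t\<bar> + \<Phi>" if t: "0 \<le> t" "t \<le> a" for t
  proof -
    have "ennreal \<bar>f 0\<bar> \<le> ennreal \<bar>f t\<bar> + ennreal \<bar>f t - f 0\<bar>"
      by (simp add: ennreal_leI flip: ennreal_plus)
    also have "ennreal \<bar>f t - f 0\<bar> \<le> \<Phi>"
      unfolding \<Phi>_def using t
      by (intro order.trans[OF ftc[OF t]] nn_integral_mono) (auto split: split_indicator)
    finally show ?thesis
      by (simp add: add_left_mono)
  qed
  have "ennreal (a * \<bar>f 0\<bar>) = (\<integral>\<^sup>+t. ennreal \<bar>f 0\<bar> * indicator {0..a} t \<partial>lborel)"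
    using a by (simp add: nn_integral_cmult_indicator ennreal_mult mult.commute)
  also have "\<dots> \<le> (\<integral>\<^sup>+t. ennreal \<bar>f t\<bar> * indicator {0..a} t + \<Phi> * indicator {0..a} t \<partial>lborel)"
    by (intro nn_integral_mono) (auto split: split_indicator intro: pointwise)
  also have "\<dots> = (\<integral>\<^sup>+t. ennreal \<bar>f t\<bar> * indicator {0..a} t \<partial>lborel) + ennreal a * \<Phi>"
    using a by (subst nn_integral_add) (auto simp: nn_integral_cmult_indicator mult.commute)
  finally show ?thesis
    unfolding \<Phi>_def .
qed

lemma endpoint_decay_le_average_plus_variation:
  fixes f g :: "real \<Rightarrow> real" and a e :: real
  assumes [measurable]: "f \<in> borel_measurable borel" "g \<in> borel_measurable borel"
    and g0: "\<And>s. g s \<ge> 0" and a: "a > 0" and e: "e > 0"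
    and ftc: "\<And>t. t \<ge> 0 \<Longrightarrow> ennreal \<bar>f t - f 0\<bar> \<le> (\<integral>\<^sup>+s. ennreal (g s) * indicator {0..t} s \<partial>lborel)"
  shows "ennreal (\<bar>f 0\<bar> * a powr (-e))
    \<le> ennreal (a powr (-(e + 1))) * (\<integral>\<^sup>+t. ennreal \<bar>f t\<bar> * indicator {0..a} t \<partial>lborel)
       + ennreal (2 powr e) * (\<integral>\<^sup>+s. ennreal (g s) * ennreal ((a + s) powr (-e)) * indicator {0..} s \<partial>lborel)"
proof -
  have scale: "a powr (-(e + 1)) * a = a powr (-e)"
    using a powr_add[of a "-(e + 1)" 1] by simp
  have shift: "ennreal (a powr (-e)) * (ennreal (g s) * indicator {0..a} s)
      \<le> ennreal (2 powr e) * (ennreal (g s) * ennreal ((a + s) powr (-e)) * indicator {0..} s)" for s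
  proof (cases "0 \<le> s \<and> s \<le> a")
    case True
    have "a powr (-e) = 2 powr e * (2 * a) powr (-e)"
      using a by (simp add: powr_mult powr_minus)
    also have "\<dots> \<le> 2 powr e * (a + s) powr (-e)"
      using True a e by (intro mult_left_mono powr_mono2') auto
    finally have "a powr (-e) * g s \<le> 2 powr e * (a + s) powr (-e) * g s"
      using g0[of s] by (rule mult_right_mono)
    then have "ennreal (a powr (-e) * g s) \<le> ennreal (2 powr e * (g s * (a + s) powr (-e)))"
      by (intro ennreal_leI) (simp add: mult_ac)
    then show ?thesis
      using True g0[of s] by (simp add: ennreal_mult)
  qed simp
  have "ennreal (\<bar>f 0\<bar> * a powr (-e)) = ennreal (a powr (-(e + 1))) * ennreal (a * \<bar>f 0\<bar>)"
    using scale by (simp only: ennreal_mult'[OF powr_ge_zero, symmetric]) (metis mult.assoc mult.commute)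
  also have "\<dots> \<le> ennreal (a powr (-(e + 1)))
      * ((\<integral>\<^sup>+t. ennreal \<bar>f t\<bar> * indicator {0..a} t \<partial>lborel) + ennreal a * (\<integral>\<^sup>+s. ennreal (g s) * indicator {0..a} s \<partial>lborel))"
    using a ftc by (intro mult_left_mono endpoint_le_average_plus_variation) auto
  also have "\<dots> = ennreal (a powr (-(e + 1))) * (\<integral>\<^sup>+t. ennreal \<bar>f t\<bar> * indicator {0..a} t \<partial>lborel)
      + ennreal (a powr (-e)) * (\<integral>\<^sup>+s. ennreal (g s) * indicator {0..a} s \<partial>lborel)"
    by (simp only: distrib_left mult.assoc[symmetric] ennreal_mult'[OF powr_ge_zero, symmetric] scale)
  also have "\<dots> \<le> ennreal (a powr (-(e + 1))) * (\<integral>\<^sup>+t. ennreal \<bar>f t\<bar> * indicator {0..a} t \<partial>lborel)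
      + ennreal (2 powr e) * (\<integral>\<^sup>+s. ennreal (g s) * ennreal ((a + s) powr (-e)) * indicator {0..} s \<partial>lborel)"
    using shift by (simp add: nn_integral_cmult[symmetric] nn_integral_mono add_left_mono del: nn_integral_cmult)
  finally show ?thesis .
qed

lemma endpoint_le_nn_integral_halfline:
  fixes f g m :: "real \<Rightarrow> real" and a e L :: real
  assumes [measurable]: "f \<in> borel_measurable borel" "g \<in> borel_measurable borel" "m \<in> borel_measurable borel"
    and g0: "\<And>s. g s \<ge> 0" and a: "a > 0" and e: "e > 0" and L: "L > 0"
    and ftc: "\<And>t. t \<ge> 0 \<Longrightarrow> ennreal \<bar>f t - f 0\<bar> \<le> (\<integral>\<^sup>+s. ennreal (g s) * indicator {0..t} s \<partial>lborel)"
    and lower: "\<And>t. 0 \<le> t \<Longrightarrow> t \<le> a \<Longrightarrow> L * (2 * a) powr (-(e + 1)) \<le> m t"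
  shows "ennreal (\<bar>f 0\<bar> * a powr (-e))
    \<le> ennreal (2 powr (e + 1) / L) * (\<integral>\<^sup>+t. ennreal (indicator {0<..} t * \<bar>f t\<bar> * m t) \<partial>lborel)
       + ennreal (2 powr e) * (\<integral>\<^sup>+s. ennreal (g s) * ennreal ((a + s) powr (-e)) * indicator {0..} s \<partial>lborel)"
proof -
  have weight: "ennreal (a powr (-(e + 1))) * (ennreal \<bar>f t\<bar> * indicator {0..a} t)
      \<le> ennreal (2 powr (e + 1) / L) * ennreal (indicator {0<..} t * \<bar>f t\<bar> * m t)" if "t \<noteq> 0" for t
  proof (cases "0 \<le> t \<and> t \<le> a")
    case True
    with that have t: "0 < t" "t \<le> a" by auto
    have m0: "0 \<le> m t"
      using lower[of t] t L by (smt (verit) mult_nonneg_nonneg powr_ge_zero)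
    have "a powr (-(e + 1)) = 2 powr (e + 1) / L * (L * (2 * a) powr (-(e + 1)))"
      using a L by (simp add: powr_mult field_simps flip: powr_add)
    also have "\<dots> \<le> 2 powr (e + 1) / L * m t"
      using lower t L by (intro mult_left_mono) auto
    finally have "a powr (-(e + 1)) * \<bar>f t\<bar> \<le> 2 powr (e + 1) / L * m t * \<bar>f t\<bar>"
      by (rule mult_right_mono) simp
    then have "ennreal (a powr (-(e + 1)) * \<bar>f t\<bar>) \<le> ennreal (2 powr (e + 1) / L * (\<bar>f t\<bar> * m t))"
      by (intro ennreal_leI) (simp add: mult_ac)
    moreover have "ennreal (2 powr (e + 1) / L) * ennreal (indicator {0<..} t * \<bar>f t\<bar> * m t)
        = ennreal (2 powr (e + 1) / L * (\<bar>f t\<bar> * m t))"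
      using t L m0 by (simp add: ennreal_mult del: times_divide_eq_left)
    ultimately show ?thesis
      using t by (simp add: ennreal_mult)
  qed simp
  have "ennreal (\<bar>f 0\<bar> * a powr (-e))
    \<le> ennreal (a powr (-(e + 1))) * (\<integral>\<^sup>+t. ennreal \<bar>f t\<bar> * indicator {0..a} t \<partial>lborel)
       + ennreal (2 powr e) * (\<integral>\<^sup>+s. ennreal (g s) * ennreal ((a + s) powr (-e)) * indicator {0..} s \<partial>lborel)"
    using g0 a e ftc by (intro endpoint_decay_le_average_plus_variation) auto
  also have "ennreal (a powr (-(e + 1))) * (\<integral>\<^sup>+t. ennreal \<bar>f t\<bar> * indicator {0..a} t \<partial>lborel)
      \<le> ennreal (2 powr (e + 1) / L) * (\<integral>\<^sup>+t. ennreal (indicator {0<..} t * \<bar>f t\<bar> * m t) \<partial>lborel)"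
  proof -
    have "AE t in lborel. ennreal (a powr (-(e + 1))) * (ennreal \<bar>f t\<bar> * indicator {0..a} t)
        \<le> ennreal (2 powr (e + 1) / L) * ennreal (indicator {0<..} t * \<bar>f t\<bar> * m t)"
      using AE_lborel_singleton[of 0] by eventually_elim (rule weight)
    then show ?thesis
      by (simp add: nn_integral_cmult[symmetric] nn_integral_mono_AE del: nn_integral_cmult)
  qed
  finally show ?thesis
    by (simp add: add_right_mono)
qed

section \<open>Smooth functions\<close>

lemma grad_norm_nonneg: "grad_norm f p \<ge> 0"
  unfolding grad_norm_def by (intro real_sqrt_ge_zero sum_nonneg) simp

lemma abs_vertical_derivative_le_grad_norm:
  fixes f :: "'a::euclidean_space \<times> real \<Rightarrow> real"
  shows "\<bar>frechet_derivative f (at p) (0, 1)\<bar> \<le> grad_norm f p"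
proof -
  have "(0::'a, 1::real) \<in> Basis"
    by (simp add: Basis_prod_def)
  then have "(frechet_derivative f (at p) (0, 1))\<^sup>2 \<le> (\<Sum>b\<in>Basis. (frechet_derivative f (at p) b)\<^sup>2)"
    by (rule member_le_sum) auto
  then have "sqrt ((frechet_derivative f (at p) (0, 1))\<^sup>2) \<le> sqrt (\<Sum>b\<in>Basis. (frechet_derivative f (at p) b)\<^sup>2)"
    by (rule real_sqrt_le_mono)
  then show ?thesis
    unfolding grad_norm_def by simp
qed

lemma grad_norm_outside_support:
  fixes f :: "'a::euclidean_space \<Rightarrow> real"
  assumes "p \<notin> closure {x. f x \<noteq> 0}"
  shows "grad_norm f p = 0"
proof -
  have "(f has_derivative (\<lambda>_. 0)) (at p)"
  proof (rule has_derivative_transform_within_open)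
    show "((\<lambda>_. 0) has_derivative (\<lambda>_. 0)) (at p)" by simp
    show "open (- closure {x. f x \<noteq> 0})" by (rule open_Compl) (rule closed_closure)
    show "p \<in> - closure {x. f x \<noteq> 0}" using assms by simp
    show "\<And>x. x \<in> - closure {x. f x \<noteq> 0} \<Longrightarrow> 0 = f x"
      using closure_subset[of "{x. f x \<noteq> 0}"] by auto
  qed
  then have "frechet_derivative f (at p) = (\<lambda>_. 0)"
    by (rule frechet_derivative_at[symmetric])
  then show ?thesis
    by (simp add: grad_norm_def)
qed

context
  fixes u :: "'a::euclidean_space \<times> real \<Rightarrow> real"
  assumes smooth: "smooth_fun u"
begin

lemma smooth_fun_differentiable: "u differentiable (at x)"
proof -
  have "dderiv [] u differentiable (at x)"
    using smooth unfolding smooth_fun_def by blast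
  then show ?thesis
    by simp
qed

lemma smooth_fun_continuous: "continuous_on UNIV u"
  by (intro continuous_at_imp_continuous_on ballI differentiable_imp_continuous_within
      smooth_fun_differentiable)

lemma smooth_fun_continuous_frechet_derivative:
  "continuous_on UNIV (\<lambda>x. frechet_derivative u (at x) v)"
proof -
  have "dderiv [v] u differentiable (at x)" for x
    using smooth unfolding smooth_fun_def by blast
  then show ?thesis
    by (intro continuous_at_imp_continuous_on) (auto intro: differentiable_imp_continuous_within)
qed

lemma smooth_fun_continuous_grad_norm: "continuous_on UNIV (grad_norm u)"
  unfolding grad_norm_def[abs_def]
  by (intro continuous_on_compose2[OF continuous_on_real_sqrt] continuous_on_sum continuous_on_power
      smooth_fun_continuous_frechet_derivative) auto

lemma smooth_fun_vertical_derivative: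
  "((\<lambda>t. u (x', t)) has_real_derivative frechet_derivative u (at (x', t)) (0, 1)) (at t)"
proof -
  let ?D = "frechet_derivative u (at (x', t))"
  have D: "(u has_derivative ?D) (at (x', t))"
    using smooth_fun_differentiable frechet_derivative_works by blast
  have "((\<lambda>t. (x', t)) has_derivative (\<lambda>h. (0, h))) (at t)"
    by (intro has_derivative_Pair has_derivative_const has_derivative_ident)
  from has_derivative_compose[OF this D]
  have "((\<lambda>t. u (x', t)) has_derivative (\<lambda>h. ?D (0, h))) (at t)" .
  moreover have "(\<lambda>h. ?D (0, h)) = (*) (?D (0, 1))"
  proof
    fix h :: real
    have "?D (h *\<^sub>R (0, 1)) = h *\<^sub>R ?D (0, 1)"
      by (rule linear_scale[OF has_derivative_linear[OF D]])
    then show "?D (0, h) = ?D (0, 1) * h"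
      by (simp add: mult.commute)
  qed
  ultimately show ?thesis
    unfolding has_field_derivative_def by simp
qed

lemma smooth_fun_vertical_increment_le:
  assumes t: "0 \<le> t"
  shows "ennreal \<bar>u (x', t) - u (x', 0)\<bar> \<le> (\<integral>\<^sup>+s. ennreal (grad_norm u (x', s)) * indicator {0..t} s \<partial>lborel)"
proof -
  let ?D = "\<lambda>s. frechet_derivative u (at (x', s)) (0, 1)"
  have cD: "continuous_on {0..t} ?D"
    by (rule continuous_on_compose2[OF smooth_fun_continuous_frechet_derivative]) (auto intro!: continuous_intros)
  have int: "integrable lborel (\<lambda>s. indicator {0..t} s *\<^sub>R ?D s)"
    by (rule borel_integrable_compact[OF compact_Icc cD])
  have "integral\<^sup>L lborel (\<lambda>s. indicator {0..t} s *\<^sub>R ?D s) = u (x', t) - u (x', 0)"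
    using t cD smooth_fun_vertical_derivative
    by (intro integral_FTC_atLeastAtMost)
      (auto simp: has_real_derivative_iff_has_vector_derivative has_vector_derivative_at_within)
  then have "ennreal \<bar>u (x', t) - u (x', 0)\<bar> \<le> ennreal (integral\<^sup>L lborel (\<lambda>s. norm (indicator {0..t} s *\<^sub>R ?D s)))"
    using integral_norm_bound[of lborel "\<lambda>s. indicator {0..t} s *\<^sub>R ?D s"] by (intro ennreal_leI) simp
  also have "\<dots> = (\<integral>\<^sup>+s. ennreal (norm (indicator {0..t} s *\<^sub>R ?D s)) \<partial>lborel)"
    using int by (intro nn_integral_eq_integral[symmetric]) auto
  also have "\<dots> \<le> (\<integral>\<^sup>+s. ennreal (grad_norm u (x', s)) * indicator {0..t} s \<partial>lborel)"
    using abs_vertical_derivative_le_grad_norm[of u "(x', _)"]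
    by (intro nn_integral_mono) (simp add: ennreal_leI split: split_indicator)
  finally show ?thesis .
qed

end

section \<open>The weights\<close>

lemma sphere_area_pos: "sphere_area k > 0"
  unfolding sphere_area_def by (intro divide_pos_pos mult_pos_pos Gamma_real_pos) auto

lemma square_powr_half:
  fixes y r :: real
  assumes "y > 0"
  shows "(y\<^sup>2) powr (r / 2) = y powr r"
proof -
  have "y\<^sup>2 = y powr 2"
    using assms by (simp add: powr_realpow)
  then show ?thesis
    by (simp add: powr_powr)
qed

lemma inverse_powr_half_le:
  fixes X y r \<sigma> :: real
  assumes "\<sigma> > 0" "y > 0" "y\<^sup>2 / 2 \<le> X" "r \<ge> 0"
  shows "2 / (\<sigma> * X powr (r / 2)) \<le> 2 / \<sigma> * 2 powr (r / 2) * y powr (-r)"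
proof -
  have "y powr r / 2 powr (r / 2) = (y\<^sup>2 / 2) powr (r / 2)"
    using assms by (simp add: powr_divide square_powr_half)
  also have "\<dots> \<le> X powr (r / 2)"
    using assms by (intro powr_mono2) auto
  finally have "2 / (\<sigma> * X powr (r / 2)) \<le> 2 / (\<sigma> * (y powr r / 2 powr (r / 2)))"
    using assms by (intro divide_left_mono mult_left_mono mult_pos_pos) auto
  then show ?thesis
    by (simp add: powr_minus_divide)
qed

lemma inverse_powr_half_ge:
  fixes X y r \<sigma> :: real
  assumes "\<sigma> > 0" "y > 0" "X > 0" "X \<le> y\<^sup>2" "r \<ge> 0"
  shows "2 / \<sigma> * y powr (-r) \<le> 2 / (\<sigma> * X powr (r / 2))"
proof -
  have "X powr (r / 2) \<le> (y\<^sup>2) powr (r / 2)"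
    using assms by (intro powr_mono2) auto
  also have "\<dots> = y powr r"
    using assms(2) by (rule square_powr_half)
  finally have "2 / (\<sigma> * y powr r) \<le> 2 / (\<sigma> * X powr (r / 2))"
    using assms by (intro divide_left_mono mult_left_mono mult_pos_pos) auto
  then show ?thesis
    by (simp add: powr_minus_divide)
qed

lemma mu_int_le_decay:
  fixes x' :: "real^'m"
  assumes "t \<ge> 0"
  shows "mu_int n (x', t) \<le> 2 / sphere_area n * 2 powr ((real n + 1) / 2) * (1 + norm x' + t) powr (-(real n + 1))"
proof -
  have "(1 + norm x' + t)\<^sup>2 / 2 \<le> (1 + t)\<^sup>2 + (norm x')\<^sup>2"
    using sum_squares_bound[of "1 + t" "norm x'"] by (simp add: algebra_simps power2_eq_square)
  then have "2 / (sphere_area n * ((1 + t)\<^sup>2 + (norm x')\<^sup>2) powr ((real n + 1) / 2))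
      \<le> 2 / sphere_area n * 2 powr ((real n + 1) / 2) * (1 + norm x' + t) powr (-(real n + 1))"
    using assms by (intro inverse_powr_half_le sphere_area_pos) (auto simp: add_pos_nonneg)
  then show ?thesis
    by (simp add: mu_int_def add.commute)
qed

lemma mu_int_ge_near_boundary:
  fixes x' :: "real^'m"
  assumes "0 \<le> t" "t \<le> 1 + norm x'"
  shows "2 / sphere_area n * (2 * (1 + norm x')) powr (-(real n + 1)) \<le> mu_int n (x', t)"
proof -
  have "(1 + t)\<^sup>2 + (norm x')\<^sup>2 \<le> (2 + norm x')\<^sup>2 + (norm x')\<^sup>2"
    using assms by (intro add_right_mono power_mono) auto
  also have "\<dots> \<le> (2 * (1 + norm x'))\<^sup>2"
    using mult_nonneg_nonneg[of "norm x'" "2 + norm x'"] by (simp add: power2_eq_square algebra_simps)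
  finally have "(1 + t)\<^sup>2 + (norm x')\<^sup>2 \<le> (2 * (1 + norm x'))\<^sup>2" .
  then have "2 / sphere_area n * (2 * (1 + norm x')) powr (-(real n + 1))
      \<le> 2 / (sphere_area n * ((1 + t)\<^sup>2 + (norm x')\<^sup>2) powr ((real n + 1) / 2))"
    using assms by (intro inverse_powr_half_ge sphere_area_pos) (auto simp: add_pos_nonneg)
  then show ?thesis
    by (simp add: mu_int_def add.commute)
qed

lemma mu_bdry_le_decay:
  fixes x' :: "real^'m"
  shows "mu_bdry n x' \<le> 2 / sphere_area (n - 1) * 2 powr (real n / 2) * (1 + norm x') powr (-real n)"
proof -
  have "(1 + norm x')\<^sup>2 / 2 \<le> 1 + (norm x')\<^sup>2"
    using sum_squares_bound[of 1 "norm x'"] by (simp add: algebra_simps power2_eq_square)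
  then show ?thesis
    unfolding mu_bdry_def by (intro inverse_powr_half_le sphere_area_pos) (auto simp: add_pos_nonneg)
qed

lemma one_plus_norm_powr_le_mu_bdry:
  fixes x' :: "real^'m"
  shows "(1 + norm x') powr (-real n) \<le> sphere_area (n - 1) / 2 * mu_bdry n x'"
proof -
  have "1 + (norm x')\<^sup>2 \<le> (1 + norm x')\<^sup>2"
    by (simp add: power2_eq_square algebra_simps)
  then have "2 / sphere_area (n - 1) * (1 + norm x') powr (-real n) \<le> mu_bdry n x'"
    unfolding mu_bdry_def by (intro inverse_powr_half_ge sphere_area_pos) (auto simp: add_pos_nonneg)
  then show ?thesis
    using sphere_area_pos[of "n - 1"] by (simp add: field_simps)
qed

lemma measurable_fst_borel [measurable]:
  "fst \<in> borel_measurable (borel :: ('a::topological_space \<times> 'b::topological_space) measure)"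
  by (intro borel_measurable_continuous_onI continuous_intros)

lemma measurable_snd_borel [measurable]:
  "snd \<in> borel_measurable (borel :: ('a::topological_space \<times> 'b::topological_space) measure)"
  by (intro borel_measurable_continuous_onI continuous_intros)

lemma upper_half_borel [measurable]: "upper_half \<in> sets borel"
proof -
  have "open {p :: (real^'m) \<times> real. 0 < snd p}"
    by (intro open_Collect_less continuous_intros)
  then show ?thesis
    unfolding upper_half_def by (simp add: case_prod_beta)
qed

lemma borel_measurable_mu_int [measurable]: "mu_int n \<in> borel_measurable borel"
  unfolding mu_int_def[abs_def] by measurable

lemma borel_measurable_mu_bdry [measurable]: "mu_bdry n \<in> borel_measurable borel"
  unfolding mu_bdry_def[abs_def] by measurable

lemma mu_int_nonneg: "mu_int n p \<ge> 0"
  unfolding mu_int_def using sphere_area_pos[of n] by simp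

lemma mu_bdry_nonneg: "mu_bdry n x' \<ge> 0"
  unfolding mu_bdry_def using sphere_area_pos[of "n - 1"] by simp

lemma mu_int_le:
  assumes "snd p \<ge> 0"
  shows "mu_int n p \<le> 2 / sphere_area n"
proof -
  have "1 \<le> (1 + snd p)\<^sup>2 + (norm (fst p))\<^sup>2"
    using assms by (simp add: add_increasing2)
  then have "1 \<le> ((1 + snd p)\<^sup>2 + (norm (fst p))\<^sup>2) powr (real (n + 1) / 2)"
    by (intro ge_one_powr_ge_zero) auto
  then show ?thesis
    unfolding mu_int_def using sphere_area_pos[of n]
    by (intro divide_left_mono mult_pos_pos) (auto simp: mult_le_cancel_left1)
qed

lemma mu_bdry_le: "mu_bdry n x' \<le> 2 / sphere_area (n - 1)"
proof -
  have "1 \<le> (1 + (norm x')\<^sup>2) powr (real n / 2)"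
    by (intro ge_one_powr_ge_zero) auto
  then show ?thesis
    unfolding mu_bdry_def using sphere_area_pos[of "n - 1"]
    by (intro divide_left_mono mult_pos_pos) (auto simp: mult_le_cancel_left1)
qed

section \<open>Compactly supported smooth functions\<close>

definition gradient_tail :: "nat \<Rightarrow> ('a::euclidean_space \<times> real \<Rightarrow> real) \<Rightarrow> 'a \<Rightarrow> ennreal" where
  "gradient_tail n u x' =
    (\<integral>\<^sup>+s. ennreal (grad_norm u (x', s)) * ennreal ((1 + norm x' + s) powr (-real n)) * indicator {0..} s \<partial>lborel)"

definition smooth_compact_support :: "('a::real_normed_vector \<Rightarrow> real) \<Rightarrow> bool" where
  "smooth_compact_support u \<longleftrightarrow> smooth_fun u \<and> compact (closure {x. u x \<noteq> 0})"

definition interior_L1_norm :: "nat \<Rightarrow> ((real^'m) \<times> real \<Rightarrow> real) \<Rightarrow> real" where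
  "interior_L1_norm n u = (LINT p|lborel. indicator upper_half p * \<bar>u p\<bar> * mu_int n p)"

definition boundary_L1_norm :: "nat \<Rightarrow> ((real^'m) \<times> real \<Rightarrow> real) \<Rightarrow> real" where
  "boundary_L1_norm n u = (LINT x'|lborel. \<bar>u (x', 0)\<bar> * mu_bdry n x')"

definition gradient_Ln_norm :: "nat \<Rightarrow> ((real^'m) \<times> real \<Rightarrow> real) \<Rightarrow> real" where
  "gradient_Ln_norm n u = (LINT p|lborel. indicator upper_half p * grad_norm u p ^ n) powr (1 / real n)"

lemma zero_outside_closure_support: "x \<notin> closure {x. f x \<noteq> 0} \<Longrightarrow> f x = 0"
  using closure_subset[of "{x. f x \<noteq> 0}"] by blast

lemma integrable_continuous_compact_support:
  fixes f :: "'a::euclidean_space \<Rightarrow> real"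
  assumes "continuous_on UNIV f" "compact K" "\<And>x. x \<notin> K \<Longrightarrow> f x = 0"
  shows "integrable lborel f"
proof -
  have "integrable lborel (\<lambda>x. indicator K x *\<^sub>R f x)"
    using assms by (intro borel_integrable_compact) (auto intro: continuous_on_subset)
  moreover have "(\<lambda>x. indicator K x *\<^sub>R f x) = f"
    using assms(3) by (auto simp: fun_eq_iff indicator_def)
  ultimately show ?thesis
    by simp
qed

context
  fixes u :: "(real^'m) \<times> real \<Rightarrow> real"
  assumes u: "smooth_compact_support u"
begin

lemma smooth_compact_support_smooth: "smooth_fun u"
  using u unfolding smooth_compact_support_def by simp

lemma smooth_compact_support_borel_measurable [measurable]: "u \<in> borel_measurable borel"
  using smooth_fun_continuous[OF smooth_compact_support_smooth] by (rule borel_measurable_continuous_onI)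

lemma borel_measurable_grad_norm [measurable]: "grad_norm u \<in> borel_measurable borel"
  using smooth_fun_continuous_grad_norm[OF smooth_compact_support_smooth] by (rule borel_measurable_continuous_onI)

lemma continuous_on_boundary_trace: "continuous_on UNIV (\<lambda>x'. u (x', 0))"
  by (rule continuous_on_compose2[OF smooth_fun_continuous[OF smooth_compact_support_smooth]])
    (auto intro!: continuous_intros)

lemma smooth_compact_support_integrable_abs: "integrable lborel (\<lambda>p. \<bar>u p\<bar>)"
proof (rule integrable_continuous_compact_support)
  show "continuous_on UNIV (\<lambda>p. \<bar>u p\<bar>)"
    using smooth_fun_continuous[OF smooth_compact_support_smooth] by (rule continuous_on_rabs)
  show "compact (closure {x. u x \<noteq> 0})"
    using u unfolding smooth_compact_support_def by simp
next
  fix p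
  assume "p \<notin> closure {x. u x \<noteq> 0}"
  then have "u p = 0"
    by (rule zero_outside_closure_support)
  then show "\<bar>u p\<bar> = 0"
    by simp
qed

lemma integrable_interior:
  "integrable lborel (\<lambda>p. indicator upper_half p * \<bar>u p\<bar> * mu_int n p)"
proof (rule Bochner_Integration.integrable_bound)
  show "integrable lborel (\<lambda>p. 2 / sphere_area n * \<bar>u p\<bar>)"
    using smooth_compact_support_integrable_abs by (rule integrable_mult_right)
  show "AE p in lborel. norm (indicator upper_half p * \<bar>u p\<bar> * mu_int n p) \<le> norm (2 / sphere_area n * \<bar>u p\<bar>)"
  proof (intro AE_I2)
    fix p :: "(real^'m) \<times> real"
    show "norm (indicator upper_half p * \<bar>u p\<bar> * mu_int n p) \<le> norm (2 / sphere_area n * \<bar>u p\<bar>)"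
    proof (cases "p \<in> upper_half")
      case True
      then have "\<bar>u p\<bar> * mu_int n p \<le> \<bar>u p\<bar> * (2 / sphere_area n)"
        by (intro mult_left_mono mu_int_le) (auto simp: upper_half_def)
      then show ?thesis
        using True mu_int_nonneg[of n p] sphere_area_pos[of n] by (simp add: abs_mult mult_ac)
    qed simp
  qed
qed measurable

lemma integrable_boundary:
  "integrable lborel (\<lambda>x'. \<bar>u (x', 0)\<bar> * mu_bdry n x')"
proof (rule Bochner_Integration.integrable_bound)
  have "u (x', 0) = 0" if "x' \<notin> fst ` closure {x. u x \<noteq> 0}" for x'
  proof -
    have "(x', 0) \<notin> closure {x. u x \<noteq> 0}"
      using that by (metis fst_conv image_eqI)
    then show ?thesis
      by (rule zero_outside_closure_support)
  qed
  moreover have "compact (fst ` closure {x. u x \<noteq> 0})"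
    using u unfolding smooth_compact_support_def by (intro compact_continuous_image continuous_intros) auto
  ultimately have "integrable lborel (\<lambda>x'. \<bar>u (x', 0)\<bar>)"
    using continuous_on_rabs[OF continuous_on_boundary_trace]
    by (intro integrable_continuous_compact_support) auto
  then show "integrable lborel (\<lambda>x'. 2 / sphere_area (n - 1) * \<bar>u (x', 0)\<bar>)"
    by (rule integrable_mult_right)
  show "(\<lambda>x'. \<bar>u (x', 0)\<bar> * mu_bdry n x') \<in> borel_measurable lborel"
    using borel_measurable_continuous_onI[OF continuous_on_boundary_trace] by measurable
  show "AE x' in lborel. norm (\<bar>u (x', 0)\<bar> * mu_bdry n x') \<le> norm (2 / sphere_area (n - 1) * \<bar>u (x', 0)\<bar>)"
  proof (intro AE_I2)
    fix x' :: "real^'m"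
    have "\<bar>u (x', 0)\<bar> * mu_bdry n x' \<le> \<bar>u (x', 0)\<bar> * (2 / sphere_area (n - 1))"
      by (intro mult_left_mono mu_bdry_le) simp
    then show "norm (\<bar>u (x', 0)\<bar> * mu_bdry n x') \<le> norm (2 / sphere_area (n - 1) * \<bar>u (x', 0)\<bar>)"
      using mu_bdry_nonneg[of n x'] sphere_area_pos[of "n - 1"] by (simp add: abs_mult mult_ac)
  qed
qed

lemma integrable_gradient:
  assumes "k > 0"
  shows "integrable lborel (\<lambda>p. indicator upper_half p * grad_norm u p ^ k)"
proof (rule Bochner_Integration.integrable_bound)
  show "integrable lborel (\<lambda>p. grad_norm u p ^ k)"
  proof (rule integrable_continuous_compact_support)
    show "continuous_on UNIV (\<lambda>p. grad_norm u p ^ k)"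
      using smooth_fun_continuous_grad_norm[OF smooth_compact_support_smooth] by (rule continuous_on_power)
    show "compact (closure {x. u x \<noteq> 0})"
      using u unfolding smooth_compact_support_def by simp
  qed (use assms grad_norm_outside_support in simp)
  show "AE p in lborel. norm (indicator upper_half p * grad_norm u p ^ k) \<le> norm (grad_norm u p ^ k)"
    by (intro AE_I2) (simp split: split_indicator)
qed measurable

lemma ennreal_interior_L1_norm:
  "ennreal (interior_L1_norm n u)
    = (\<integral>\<^sup>+x'. \<integral>\<^sup>+t. ennreal (indicator {0<..} t * \<bar>u (x', t)\<bar> * mu_int n (x', t)) \<partial>lborel \<partial>lborel)"
proof -
  have "ennreal (interior_L1_norm n u) = (\<integral>\<^sup>+p. ennreal (indicator upper_half p * \<bar>u p\<bar> * mu_int n p) \<partial>lborel)"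
    unfolding interior_L1_norm_def using integrable_interior
    by (intro nn_integral_eq_integral[symmetric]) (auto intro!: AE_I2 mult_nonneg_nonneg mu_int_nonneg)
  also have "\<dots> = (\<integral>\<^sup>+x'. \<integral>\<^sup>+t. ennreal (indicator upper_half (x', t) * \<bar>u (x', t)\<bar> * mu_int n (x', t)) \<partial>lborel \<partial>lborel)"
    by (rule nn_integral_lborel_pair) measurable
  finally show ?thesis
    by (simp add: upper_half_def indicator_def)
qed

lemma ennreal_boundary_L1_norm:
  "ennreal (boundary_L1_norm n u) = (\<integral>\<^sup>+x'. ennreal (\<bar>u (x', 0)\<bar> * mu_bdry n x') \<partial>lborel)"
  unfolding boundary_L1_norm_def using integrable_boundary
  by (intro nn_integral_eq_integral[symmetric]) (auto intro!: AE_I2 mult_nonneg_nonneg mu_bdry_nonneg)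

lemma nn_integral_gradient_powr:
  assumes "n > 0"
  shows "(\<integral>\<^sup>+p. ennreal ((indicator upper_half p * grad_norm u p) powr real n) \<partial>lborel)
    = ennreal (LINT p|lborel. indicator upper_half p * grad_norm u p ^ n)"
proof -
  have "(indicator upper_half p * grad_norm u p) powr real n = indicator upper_half p * grad_norm u p ^ n" for p
    using assms grad_norm_nonneg[of u p] by (cases "grad_norm u p = 0") (auto simp: powr_realpow indicator_def)
  then show ?thesis
    using integrable_gradient[OF assms] grad_norm_nonneg[of u]
    by (simp add: nn_integral_eq_integral)
qed

lemma borel_measurable_gradient_tail [measurable]: "gradient_tail n u \<in> borel_measurable borel"
proof -
  have "(\<lambda>(x', s). ennreal (grad_norm u (x', s)) * ennreal ((1 + norm x' + s) powr (-real n)) * indicator {0..} s)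
      \<in> borel_measurable (lborel \<Otimes>\<^sub>M lborel)"
    by (simp add: lborel_prod case_prod_beta') measurable
  then have "gradient_tail n u \<in> borel_measurable lborel"
    unfolding gradient_tail_def[abs_def] by (rule lborel.borel_measurable_nn_integral)
  then show ?thesis
    by simp
qed

lemma nn_integral_gradient_tail_eq:
  "(\<integral>\<^sup>+x'. gradient_tail n u x' \<partial>lborel)
    = (\<integral>\<^sup>+p. ennreal (indicator upper_half p * grad_norm u p
        * (indicator upper_half p * (1 + norm (fst p) + snd p) powr (-real n))) \<partial>lborel)"
proof -
  have "ennreal (grad_norm u (x', s)) * ennreal ((1 + norm x' + s) powr (-real n)) * indicator {0..} s
      = ennreal (indicator upper_half (x', s) * grad_norm u (x', s)
        * (indicator upper_half (x', s) * (1 + norm x' + s) powr (-real n)))" if "s \<noteq> 0" for x' s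
    using that grad_norm_nonneg[of u "(x', s)"]
    by (cases "s > 0") (simp_all add: upper_half_def ennreal_mult')
  then have "(\<integral>\<^sup>+x'. gradient_tail n u x' \<partial>lborel)
      = (\<integral>\<^sup>+x'. \<integral>\<^sup>+s. ennreal (indicator upper_half (x', s) * grad_norm u (x', s)
        * (indicator upper_half (x', s) * (1 + norm x' + s) powr (-real n))) \<partial>lborel \<partial>lborel)"
    unfolding gradient_tail_def
    by (intro nn_integral_cong nn_integral_cong_AE) (auto intro: AE_mp[OF AE_lborel_singleton[of 0]])
  also have "\<dots> = (\<integral>\<^sup>+p. ennreal (indicator upper_half p * grad_norm u p
        * (indicator upper_half p * (1 + norm (fst p) + snd p) powr (-real n))) \<partial>lborel)"
  proof -
    have "(\<lambda>p. ennreal (indicator upper_half p * grad_norm u p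
        * (indicator upper_half p * (1 + norm (fst p) + snd p) powr (-real n)))) \<in> borel_measurable borel"
      by measurable
    from nn_integral_lborel_pair[OF this] show ?thesis
      by simp
  qed
  finally show ?thesis .
qed

lemma vertical_interior_le:
  assumes "n > 0"
  shows "(\<integral>\<^sup>+t. ennreal (indicator {0<..} t * \<bar>u (x', t)\<bar> * mu_int n (x', t)) \<partial>lborel)
    \<le> ennreal (2 / sphere_area n * 2 powr ((real n + 1) / 2) / real n)
      * (ennreal (\<bar>u (x', 0)\<bar> * (1 + norm x') powr (-real n)) + gradient_tail n u x')"
  unfolding gradient_tail_def
proof (rule nn_integral_halfline_le_endpoint)
  show "\<And>t. 0 \<le> t \<Longrightarrow> ennreal \<bar>u (x', t) - u (x', 0)\<bar> \<le> (\<integral>\<^sup>+s. ennreal (grad_norm u (x', s)) * indicator {0..t} s \<partial>lborel)"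
    by (rule smooth_fun_vertical_increment_le[OF smooth_compact_support_smooth])
  show "\<And>t. 0 \<le> t \<Longrightarrow> mu_int n (x', t) \<le> 2 / sphere_area n * 2 powr ((real n + 1) / 2) * (1 + norm x' + t) powr (-(real n + 1))"
    by (rule mu_int_le_decay)
qed (use assms sphere_area_pos[of n] grad_norm_nonneg mu_int_nonneg in \<open>auto simp: add_pos_nonneg\<close>)

lemma vertical_boundary_le:
  assumes "n > 0"
  shows "ennreal (\<bar>u (x', 0)\<bar> * (1 + norm x') powr (-real n))
    \<le> ennreal (2 powr (real n + 1) / (2 / sphere_area n))
        * (\<integral>\<^sup>+t. ennreal (indicator {0<..} t * \<bar>u (x', t)\<bar> * mu_int n (x', t)) \<partial>lborel)
      + ennreal (2 powr real n) * gradient_tail n u x'"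
  unfolding gradient_tail_def
proof (rule endpoint_le_nn_integral_halfline)
  show "\<And>t. 0 \<le> t \<Longrightarrow> ennreal \<bar>u (x', t) - u (x', 0)\<bar> \<le> (\<integral>\<^sup>+s. ennreal (grad_norm u (x', s)) * indicator {0..t} s \<partial>lborel)"
    by (rule smooth_fun_vertical_increment_le[OF smooth_compact_support_smooth])
  show "\<And>t. 0 \<le> t \<Longrightarrow> t \<le> 1 + norm x' \<Longrightarrow> 2 / sphere_area n * (2 * (1 + norm x')) powr (-(real n + 1)) \<le> mu_int n (x', t)"
    by (rule mu_int_ge_near_boundary)
qed (use assms sphere_area_pos[of n] grad_norm_nonneg in \<open>auto simp: add_pos_nonneg\<close>)

lemma vertical_interior_le_boundary:
  assumes n: "n > 0"
  shows "(\<integral>\<^sup>+t. ennreal (indicator {0<..} t * \<bar>u (x', t)\<bar> * mu_int n (x', t)) \<partial>lborel)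
    \<le> ennreal (2 / sphere_area n * 2 powr ((real n + 1) / 2) / real n * (sphere_area (n - 1) / 2 + 1))
      * (ennreal (\<bar>u (x', 0)\<bar> * mu_bdry n x') + gradient_tail n u x')"
proof -
  define c where "c = 2 / sphere_area n * 2 powr ((real n + 1) / 2) / real n"
  define b where "b = sphere_area (n - 1) / 2"
  have c: "c \<ge> 0" and b: "b \<ge> 0"
    using sphere_area_pos[of n] sphere_area_pos[of "n - 1"] by (simp_all add: c_def b_def)
  have "\<bar>u (x', 0)\<bar> * (1 + norm x') powr (-real n) \<le> b * (\<bar>u (x', 0)\<bar> * mu_bdry n x')"
    using mult_left_mono[OF one_plus_norm_powr_le_mu_bdry[of x' n] abs_ge_zero[of "u (x', 0)"]]
    by (simp add: b_def mult_ac)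
  then have "ennreal (\<bar>u (x', 0)\<bar> * (1 + norm x') powr (-real n)) \<le> ennreal (b * (\<bar>u (x', 0)\<bar> * mu_bdry n x'))"
    by (rule ennreal_leI)
  also have "\<dots> = ennreal b * ennreal (\<bar>u (x', 0)\<bar> * mu_bdry n x')"
    using b mu_bdry_nonneg[of n x'] by (intro ennreal_mult) auto
  finally have decay: "ennreal (\<bar>u (x', 0)\<bar> * (1 + norm x') powr (-real n)) \<le> ennreal b * ennreal (\<bar>u (x', 0)\<bar> * mu_bdry n x')" .
  have "(\<integral>\<^sup>+t. ennreal (indicator {0<..} t * \<bar>u (x', t)\<bar> * mu_int n (x', t)) \<partial>lborel)
      \<le> ennreal c * (ennreal (\<bar>u (x', 0)\<bar> * (1 + norm x') powr (-real n)) + gradient_tail n u x')"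
    using vertical_interior_le[OF n, of x'] by (simp add: c_def)
  also have "\<dots> \<le> ennreal c * (ennreal b * ennreal (\<bar>u (x', 0)\<bar> * mu_bdry n x') + 1 * gradient_tail n u x')"
    using decay by (intro mult_left_mono add_mono) auto
  also have "\<dots> \<le> ennreal c * ((ennreal b + 1) * (ennreal (\<bar>u (x', 0)\<bar> * mu_bdry n x') + gradient_tail n u x'))"
    by (intro mult_left_mono ennreal_mult_add_le_mult_add) simp
  also have "\<dots> = ennreal (c * (b + 1)) * (ennreal (\<bar>u (x', 0)\<bar> * mu_bdry n x') + gradient_tail n u x')"
    using b c by (simp add: ennreal_mult ennreal_plus mult.assoc)
  finally show ?thesis
    by (simp add: c_def b_def)
qed

lemma vertical_boundary_le_interior:
  assumes n: "n > 0"
  shows "ennreal (\<bar>u (x', 0)\<bar> * mu_bdry n x')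
    \<le> ennreal (2 / sphere_area (n - 1) * 2 powr (real n / 2) * (2 powr (real n + 1) / (2 / sphere_area n) + 2 powr real n))
      * ((\<integral>\<^sup>+t. ennreal (indicator {0<..} t * \<bar>u (x', t)\<bar> * mu_int n (x', t)) \<partial>lborel) + gradient_tail n u x')"
proof -
  define d where "d = 2 / sphere_area (n - 1) * 2 powr (real n / 2)"
  define a where "a = 2 powr (real n + 1) / (2 / sphere_area n)"
  have d: "d \<ge> 0" and a: "a \<ge> 0"
    using sphere_area_pos[of n] sphere_area_pos[of "n - 1"] by (simp_all add: d_def a_def)
  have "\<bar>u (x', 0)\<bar> * mu_bdry n x' \<le> d * (\<bar>u (x', 0)\<bar> * (1 + norm x') powr (-real n))"
    using mult_left_mono[OF mu_bdry_le_decay[of n x'] abs_ge_zero[of "u (x', 0)"]]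
    by (simp add: d_def mult_ac)
  then have "ennreal (\<bar>u (x', 0)\<bar> * mu_bdry n x') \<le> ennreal (d * (\<bar>u (x', 0)\<bar> * (1 + norm x') powr (-real n)))"
    by (rule ennreal_leI)
  also have "\<dots> = ennreal d * ennreal (\<bar>u (x', 0)\<bar> * (1 + norm x') powr (-real n))"
    using d by (intro ennreal_mult) auto
  also have "\<dots> \<le> ennreal d * (ennreal a * (\<integral>\<^sup>+t. ennreal (indicator {0<..} t * \<bar>u (x', t)\<bar> * mu_int n (x', t)) \<partial>lborel)
      + ennreal (2 powr real n) * gradient_tail n u x')"
    using vertical_boundary_le[OF n, of x'] unfolding a_def by (rule mult_left_mono) simp
  also have "\<dots> \<le> ennreal d * ((ennreal a + ennreal (2 powr real n))
      * ((\<integral>\<^sup>+t. ennreal (indicator {0<..} t * \<bar>u (x', t)\<bar> * mu_int n (x', t)) \<partial>lborel) + gradient_tail n u x'))"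
    by (intro mult_left_mono ennreal_mult_add_le_mult_add) simp
  also have "\<dots> = ennreal (d * (a + 2 powr real n))
      * ((\<integral>\<^sup>+t. ennreal (indicator {0<..} t * \<bar>u (x', t)\<bar> * mu_int n (x', t)) \<partial>lborel) + gradient_tail n u x')"
    using a d by (simp add: ennreal_mult ennreal_plus mult.assoc)
  finally show ?thesis
    unfolding d_def a_def .
qed

end

section \<open>The two inequalities\<close>

lemma upper_half_weight_powr_finite:
  fixes e q :: real
  assumes q: "q > 0" and eq: "e * q > CARD('m) + 1"
  shows "(\<integral>\<^sup>+p. ennreal ((indicator (upper_half :: ((real^'m) \<times> real) set) p * (1 + norm (fst p) + snd p) powr (-e)) powr q) \<partial>lborel)
    < \<infinity>"
proof -
  have "(indicator upper_half (x', s) * (1 + norm x' + s) powr (-e)) powr q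
      = indicator {0<..} s * (1 + norm x' + s) powr (-(e * q))" for x' :: "real^'m" and s
    using q by (cases "s > 0") (auto simp: upper_half_def powr_powr add_pos_nonneg)
  then have "(\<integral>\<^sup>+p. ennreal ((indicator (upper_half :: ((real^'m) \<times> real) set) p * (1 + norm (fst p) + snd p) powr (-e)) powr q) \<partial>lborel)
      = (\<integral>\<^sup>+x'. \<integral>\<^sup>+s. ennreal (indicator {0<..} s * (1 + norm (x'::real^'m) + s) powr (-(e * q))) \<partial>lborel \<partial>lborel)"
    by (subst nn_integral_lborel_pair) (simp_all, measurable)
  also have "\<dots> \<le> (\<integral>\<^sup>+x'. \<integral>\<^sup>+s. ennreal ((1 + norm (x'::real^'m) + s) powr (-(e * q))) * indicator {0..} s \<partial>lborel \<partial>lborel)"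
    by (intro nn_integral_mono) (simp split: split_indicator)
  also have "\<dots> < \<infinity>"
    using eq by (intro nn_integral_half_space_weight_finite) simp
  finally show ?thesis .
qed

lemma nn_integral_gradient_tail_le:
  assumes n: "n = CARD('m) + 1"
  shows "\<exists>H\<ge>0. \<forall>u :: (real^'m) \<times> real \<Rightarrow> real. smooth_compact_support u \<longrightarrow>
    (\<integral>\<^sup>+x'. gradient_tail n u x' \<partial>lborel) \<le> ennreal (H * gradient_Ln_norm n u)"
proof -
  define q where "q = real n / (real n - 1)"
  have n1: "real n > 1" using n by simp
  have q1: "q > 1" and conj: "1 / real n + 1 / q = 1"
    using n1 by (simp_all add: q_def field_simps)
  define w where "w p = indicator upper_half p * (1 + norm (fst p) + snd p) powr (-real n)" for p :: "(real^'m) \<times> real"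
  have [measurable]: "w \<in> borel_measurable borel"
    unfolding w_def[abs_def] by measurable
  have "real n * q > CARD('m) + 1"
    using n n1 by (simp add: q_def field_simps)
  then have "(\<integral>\<^sup>+p. ennreal (w p powr q) \<partial>lborel) < \<infinity>"
    unfolding w_def using q1 by (intro upper_half_weight_powr_finite) auto
  define A where "A = enn2real (\<integral>\<^sup>+p. ennreal (w p powr q) \<partial>lborel)"
  have A: "A \<ge> 0" "(\<integral>\<^sup>+p. ennreal (w p powr q) \<partial>lborel) = ennreal A"
    using \<open>_ < \<infinity>\<close> by (simp_all add: A_def)
  show ?thesis
  proof (intro exI[of _ "1 / real n + A / q"] conjI allI impI)
    show "0 \<le> 1 / real n + A / q"
      using A q1 by simp
    fix u :: "(real^'m) \<times> real \<Rightarrow> real"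
    assume u: "smooth_compact_support u"
    define G where "G p = indicator upper_half p * grad_norm u p" for p :: "(real^'m) \<times> real"
    have [measurable]: "G \<in> borel_measurable borel"
      unfolding G_def[abs_def] using u by measurable
    have "(\<integral>\<^sup>+x'. gradient_tail n u x' \<partial>lborel) = (\<integral>\<^sup>+p. ennreal (G p * w p) \<partial>lborel)"
      unfolding G_def w_def by (rule nn_integral_gradient_tail_eq[OF u])
    also have "\<dots> \<le> ennreal ((LINT p|lborel. indicator upper_half p * grad_norm u p ^ n) powr (1 / real n) * (1 / real n + A / q))"
    proof (rule nn_integral_mult_le_Young[OF n1 q1 conj])
      show "(\<integral>\<^sup>+p. ennreal (G p powr real n) \<partial>lborel) = ennreal (LINT p|lborel. indicator upper_half p * grad_norm u p ^ n)"
        unfolding G_def using n1 by (intro nn_integral_gradient_powr[OF u]) simp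
      show "0 \<le> (LINT p|lborel. indicator upper_half p * grad_norm u p ^ n)"
        using grad_norm_nonneg[of u] by (intro integral_nonneg_AE AE_I2) simp
      show "G p \<ge> 0" "w p \<ge> 0" for p
        using grad_norm_nonneg[of u p] by (simp_all add: G_def w_def)
    qed (use A in \<open>simp_all add: measurable_lborel2\<close>)
    finally show "(\<integral>\<^sup>+x'. gradient_tail n u x' \<partial>lborel) \<le> ennreal ((1 / real n + A / q) * gradient_Ln_norm n u)"
      by (simp add: gradient_Ln_norm_def mult.commute)
  qed
qed

lemma interior_L1_norm_nonneg: "interior_L1_norm n u \<ge> 0"
  unfolding interior_L1_norm_def by (intro integral_nonneg_AE AE_I2 mult_nonneg_nonneg mu_int_nonneg) auto

lemma boundary_L1_norm_nonneg: "boundary_L1_norm n u \<ge> 0"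
  unfolding boundary_L1_norm_def by (intro integral_nonneg_AE AE_I2 mult_nonneg_nonneg mu_bdry_nonneg) auto

lemma gradient_Ln_norm_nonneg: "gradient_Ln_norm n u \<ge> 0"
  unfolding gradient_Ln_norm_def by simp

lemma le_of_ennreal_le_mult_add:
  fixes x y z K H :: real and T :: ennreal
  assumes "ennreal x \<le> ennreal K * (ennreal y + T)" "T \<le> ennreal (H * z)"
    and "K \<ge> 0" "H \<ge> 0" "y \<ge> 0" "z \<ge> 0"
  shows "x \<le> K * (1 + H) * (y + z)"
proof -
  have "ennreal K * (ennreal y + T) \<le> ennreal K * (ennreal y + ennreal (H * z))"
    using assms(2) by (intro mult_left_mono add_left_mono) auto
  with assms(1) have "ennreal x \<le> ennreal K * (ennreal y + ennreal (H * z))"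
    by (rule order_trans)
  also have "\<dots> = ennreal (K * (y + H * z))"
    using assms(3-6) by (simp add: ennreal_plus ennreal_mult)
  finally have "x \<le> K * (y + H * z)"
    using assms(3-6) by (simp add: ennreal_le_iff)
  also have "\<dots> \<le> K * ((1 + H) * (y + z))"
    using assms(3-6) mult_nonneg_nonneg[of H y] by (intro mult_left_mono) (simp_all add: algebra_simps)
  finally show ?thesis
    by (simp add: mult.assoc)
qed

lemma interior_L1_norm_le:
  assumes n: "n = CARD('m) + 1"
  shows "\<exists>K\<ge>0. \<forall>u :: (real^'m) \<times> real \<Rightarrow> real. smooth_compact_support u \<longrightarrow>
    interior_L1_norm n u \<le> K * (boundary_L1_norm n u + gradient_Ln_norm n u)"
proof -
  define K where "K = 2 / sphere_area n * 2 powr ((real n + 1) / 2) / real n * (sphere_area (n - 1) / 2 + 1)"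
  have K: "K \<ge> 0"
    using sphere_area_pos[of n] sphere_area_pos[of "n - 1"] by (simp add: K_def)
  obtain H where H: "H \<ge> 0" "\<And>u :: (real^'m) \<times> real \<Rightarrow> real. smooth_compact_support u \<Longrightarrow>
      (\<integral>\<^sup>+x'. gradient_tail n u x' \<partial>lborel) \<le> ennreal (H * gradient_Ln_norm n u)"
    using nn_integral_gradient_tail_le[OF n] by blast
  show ?thesis
  proof (intro exI[of _ "K * (1 + H)"] conjI allI impI)
    show "K * (1 + H) \<ge> 0"
      using K H by simp
    fix u :: "(real^'m) \<times> real \<Rightarrow> real"
    assume u: "smooth_compact_support u"
    have "ennreal (interior_L1_norm n u) \<le> ennreal K * (ennreal (boundary_L1_norm n u) + (\<integral>\<^sup>+x'. gradient_tail n u x' \<partial>lborel))"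
      unfolding ennreal_interior_L1_norm[OF u] ennreal_boundary_L1_norm[OF u] K_def
      using u n by (intro nn_integral_le_cmult_add vertical_interior_le_boundary) auto
    then show "interior_L1_norm n u \<le> K * (1 + H) * (boundary_L1_norm n u + gradient_Ln_norm n u)"
      using H(2)[OF u] K H(1) boundary_L1_norm_nonneg gradient_Ln_norm_nonneg
      by (rule le_of_ennreal_le_mult_add)
  qed
qed

lemma boundary_L1_norm_le:
  assumes n: "n = CARD('m) + 1"
  shows "\<exists>K\<ge>0. \<forall>u :: (real^'m) \<times> real \<Rightarrow> real. smooth_compact_support u \<longrightarrow>
    boundary_L1_norm n u \<le> K * (interior_L1_norm n u + gradient_Ln_norm n u)"
proof -
  define K where "K = 2 / sphere_area (n - 1) * 2 powr (real n / 2)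
    * (2 powr (real n + 1) / (2 / sphere_area n) + 2 powr real n)"
  have K: "K \<ge> 0"
    using sphere_area_pos[of n] sphere_area_pos[of "n - 1"] by (simp add: K_def)
  obtain H where H: "H \<ge> 0" "\<And>u :: (real^'m) \<times> real \<Rightarrow> real. smooth_compact_support u \<Longrightarrow>
      (\<integral>\<^sup>+x'. gradient_tail n u x' \<partial>lborel) \<le> ennreal (H * gradient_Ln_norm n u)"
    using nn_integral_gradient_tail_le[OF n] by blast
  show ?thesis
  proof (intro exI[of _ "K * (1 + H)"] conjI allI impI)
    show "K * (1 + H) \<ge> 0"
      using K H by simp
    fix u :: "(real^'m) \<times> real \<Rightarrow> real"
    assume u: "smooth_compact_support u"
    have "ennreal (boundary_L1_norm n u) \<le> ennreal K * (ennreal (interior_L1_norm n u) + (\<integral>\<^sup>+x'. gradient_tail n u x' \<partial>lborel))"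
      unfolding ennreal_interior_L1_norm[OF u] ennreal_boundary_L1_norm[OF u] K_def
      using u n by (intro nn_integral_le_cmult_add vertical_boundary_le_interior) auto
    then show "boundary_L1_norm n u \<le> K * (1 + H) * (interior_L1_norm n u + gradient_Ln_norm n u)"
      using H(2)[OF u] K H(1) interior_L1_norm_nonneg gradient_Ln_norm_nonneg
      by (rule le_of_ennreal_le_mult_add)
  qed
qed

theorem lemmaA1:
  fixes n :: nat
  defines "n \<equiv> CARD('m::finite) + 1"
  shows "\<exists>C>0. \<forall>u :: (real^'m) \<times> real \<Rightarrow> real.
    smooth_fun u \<and> compact (closure {x. u x \<noteq> 0}) \<longrightarrow>
      (LINT p|lborel. indicator upper_half p * \<bar>u p\<bar> * mu_int n p)
        \<le> C * ((LINT x'|lborel. \<bar>u (x', 0)\<bar> * mu_bdry n x')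
               + (LINT p|lborel. indicator upper_half p * grad_norm u p ^ n) powr (1 / real n))
    \<and> (LINT x'|lborel. \<bar>u (x', 0)\<bar> * mu_bdry n x')
        \<le> C * ((LINT p|lborel. indicator upper_half p * \<bar>u p\<bar> * mu_int n p)
               + (LINT p|lborel. indicator upper_half p * grad_norm u p ^ n) powr (1 / real n))"
proof -
  have n: "n = CARD('m) + 1"
    by (simp add: n_def)
  obtain K1 where K1: "K1 \<ge> 0" "\<And>u :: (real^'m) \<times> real \<Rightarrow> real. smooth_compact_support u \<Longrightarrow>
      interior_L1_norm n u \<le> K1 * (boundary_L1_norm n u + gradient_Ln_norm n u)"
    using interior_L1_norm_le[OF n] by blast
  obtain K2 where K2: "K2 \<ge> 0" "\<And>u :: (real^'m) \<times> real \<Rightarrow> real. smooth_compact_support u \<Longrightarrow>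
      boundary_L1_norm n u \<le> K2 * (interior_L1_norm n u + gradient_Ln_norm n u)"
    using boundary_L1_norm_le[OF n] by blast
  have "interior_L1_norm n u \<le> (K1 + K2 + 1) * (boundary_L1_norm n u + gradient_Ln_norm n u)
      \<and> boundary_L1_norm n u \<le> (K1 + K2 + 1) * (interior_L1_norm n u + gradient_Ln_norm n u)"
    if "smooth_compact_support u" for u :: "(real^'m) \<times> real \<Rightarrow> real"
    using K1(2)[OF that] K2(2)[OF that] K1(1) K2(1)
      interior_L1_norm_nonneg[of n u] boundary_L1_norm_nonneg[of n u] gradient_Ln_norm_nonneg[of n u]
    by (smt (verit) mult_right_mono)
  then show ?thesis
    using K1(1) K2(1)
    by (intro exI[of _ "K1 + K2 + 1"]) (auto simp: smooth_compact_support_def interior_L1_norm_def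
        boundary_L1_norm_def gradient_Ln_norm_def)
qed
end
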